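(* Let $\Omega\subset\mathbb{R}^2$ be the unit disc. Fix $r_1\in(0,1)$ and let $\sigma_1,\sigma_2>0$. If the Neumann-to-Dirichlet maps satisfy $R_{\sigma_1,r_1}=R_{\sigma_2,r_1}$ (as maps $H^{-1/2}(\partial\Omega)\to H^{1/2}(\partial\Omega)$), then $\sigma_1=\sigma_2$.
   Context: Polar coordinates $(r,\phi)$ on the unit disc; $I_n,K_n$ are the modified Bessel functions of first and second kind of order $n$; $g_n=(g,e^{in\phi})$. For $r_1\in(0,1)$, $\sigma>0$ and $g\in H^{-1/2}(\partial\Omega)$, let $\psi$ solve $\frac{1}{r}\partial_r(r\partial_r\psi)+\frac{1}{r^2}\partial_\phi^2\psi-\sigma^{-1}\psi=0$ for $0<r<r_1$; $\frac{1}{r}\partial_r(r\partial_r\psi)+\frac{1}{r^2}\partial_\phi^2\psi-\psi=0$ for $r_1<r<1$; $\psi|_{r=r_1}^+=\psi|_{r=r_1}^-$, $\partial_r\psi|_{r=r_1}^+=\sigma\,\partial_r\psi|_{r=r_1}^-$ ($\pm$ = limits from outside/inside $r=r_1$); $\partial_r\psi|_{r=1}=g$; $\psi$ bounded at $r=0$. The Neumann-to-Dirichlet map is $R_{\sigma,r_1}(g)=\psi|_{r=1}$. Explicitly, with $D(x,y)=I_n(x)K_n(y)-K_n(x)I_n(y)$ and $D_{r,s}=\partial_x^r\partial_y^sD$, $R_{\sigma,r_1}(g)=\sum_{n\in\mathbb{Z}}\frac{I_n(r_1/\sqrt{\sigma})D_{0,1}(1,r_1)-\sigma I_n'(r_1/\sqrt{\sigma})D(1,r_1)}{I_n(r_1/\sqrt{\sigma})D_{1,1}(1,r_1)-\sigma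 I_n'(r_1/\sqrt{\sigma})D_{1,0}(1,r_1)}g_ne^{in\phi}$. (This models the Schrödinger equation with piecewise constant potential $\widetilde U=\widetilde E+\sigma^{-1}$ in the core and $\widetilde E+1$ in the shell.) *)

theory Defs
  imports "HOL-Analysis.Analysis"
begin

definition besselI :: "int \<Rightarrow> real \<Rightarrow> real" where
  "besselI n x = (\<Sum>k. (x / 2) ^ (2 * k + nat \<bar>n\<bar>) / (fact k * fact (k + nat \<bar>n\<bar>)))"

definition besselK :: "int \<Rightarrow> real \<Rightarrow> real" where
  "besselK n x = integral {0..} (\<lambda>t. exp (- x * cosh t) * cosh (of_int n * t))"

definition Dfun :: "int \<Rightarrow> real \<Rightarrow> real \<Rightarrow> real" where
  "Dfun n x y = besselI n x * besselK n y - besselK n x * besselI n y"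

definition D01 :: "int \<Rightarrow> real \<Rightarrow> real \<Rightarrow> real" where
  "D01 n x y = besselI n x * deriv (besselK n) y - besselK n x * deriv (besselI n) y"

definition D10 :: "int \<Rightarrow> real \<Rightarrow> real \<Rightarrow> real" where
  "D10 n x y = deriv (besselI n) x * besselK n y - deriv (besselK n) x * besselI n y"

definition D11 :: "int \<Rightarrow> real \<Rightarrow> real \<Rightarrow> real" where
  "D11 n x y = deriv (besselI n) x * deriv (besselK n) y - deriv (besselK n) x * deriv (besselI n) y"

text \<open>Fourier multiplier of the Neumann-to-Dirichlet map R_{sigma,r1} at mode n.
  The factor I_n'(r1/sqrt sigma) is read as the r-derivative of r \<mapsto> I_n(r/sqrt sigma) at r1
  (this is what the transmission problem yields).\<close>
definition NtD_mult :: "real \<Rightarrow> real \<Rightarrow> int \<Rightarrow> real" where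
  "NtD_mult \<sigma> r1 n =
     (let a = besselI n (r1 / sqrt \<sigma>);
          b = \<sigma> * deriv (\<lambda>r. besselI n (r / sqrt \<sigma>)) r1
      in (a * D01 n 1 r1 - b * Dfun n 1 r1) / (a * D11 n 1 r1 - b * D10 n 1 r1))"

text \<open>H^{-1/2}(boundary of the unit disc), represented by Fourier coefficient sequences
  g_n = (g, e^{in phi}), n \<in> Z.\<close>
definition Hmhalf :: "(int \<Rightarrow> complex) set" where
  "Hmhalf = {g. (\<lambda>n::int. (1 + real_of_int n ^ 2) powr (-1/2) * (cmod (g n))\<^sup>2) summable_on UNIV}"

definition NtD :: "real \<Rightarrow> real \<Rightarrow> (int \<Rightarrow> complex) \<Rightarrow> (int \<Rightarrow> complex)" where
  "NtD \<sigma> r1 g = (\<lambda>n. complex_of_real (NtD_mult \<sigma> r1 n) * g n)"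

end

theory Submission
  imports Defs
begin

text \<open>Only the constant Neumann datum (the mode n = 0) is needed. Its multiplier is a linear
  fractional function of tau(sigma) = sqrt sigma * I1(r1 / sqrt sigma) / I0(r1 / sqrt sigma)
  whose coefficients depend on r1 alone; their signs (from positivity and monotonicity of
  I0, I1, K0, K1 together with I0' = I1 and K0' = -K1) make it injective on tau \<ge> 0.
  Writing I_n(x) = (x/2)^n S_n(x^2/4) with S_n(w) = sum_k w^k / (k! (k+n)!), one has
  tau = r1/2 * S_1(w) / S_0(w) with w = r1^2 / (4 sigma), and S_1/S_0 is strictly decreasing
  because the ratio 1/(k+1) of its coefficients is. So the multiplier determines w, hence sigma.\<close>

section \<open>Integrals of powers of cosh and the functions K0, K1\<close>

lemma power_div_fact_le_exp:
  fixes x :: real assumes "0 \<le> x" shows "x ^ n / fact n \<le> exp x"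
proof -
  have "(\<Sum>m\<in>{n}. x ^ m / fact m) \<le> (\<Sum>m. x ^ m / fact m)"
    using assms summable_exp_generic[of x]
    by (intro sum_le_suminf) (auto simp: divide_inverse ac_simps)
  then show ?thesis by (simp add: exp_def divide_inverse ac_simps)
qed

lemma cosh_power_mult_exp_le:
  fixes a t :: real assumes a: "0 < a" and t: "0 \<le> t"
  shows "cosh t ^ k * exp (- a * cosh t) \<le> 2 * fact (k + 1) / a ^ (k + 1) * exp (- t)"
proof -
  define c where "c = cosh t"
  have c_ge: "exp t / 2 \<le> c" unfolding c_def cosh_def by simp
  have c_pos: "0 < c" using c_ge exp_gt_zero[of t] by linarith
  have exp_ge: "(a * c) ^ (k + 1) / fact (k + 1) \<le> exp (a * c)"
    using power_div_fact_le_exp[of "a * c" "k + 1"] a c_pos by simp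
  have "c ^ k * exp (- a * c) = c ^ (k + 1) / (c * exp (a * c))"
    using c_pos by (simp add: exp_minus field_simps)
  also have "\<dots> \<le> c ^ (k + 1) / (c * ((a * c) ^ (k + 1) / fact (k + 1)))"
    using exp_ge a c_pos by (intro divide_left_mono mult_left_mono) auto
  also have "\<dots> = fact (k + 1) / a ^ (k + 1) / c"
    using a c_pos by (simp add: power_mult_distrib field_simps)
  also have "\<dots> \<le> fact (k + 1) / a ^ (k + 1) / (exp t / 2)"
    using c_ge a c_pos by (intro divide_left_mono) auto
  also have "\<dots> = 2 * fact (k + 1) / a ^ (k + 1) * exp (- t)"
    by (simp add: exp_minus field_simps)
  finally show ?thesis unfolding c_def .
qed

definition cosh_moment :: "nat \<Rightarrow> real \<Rightarrow> real" where
  "cosh_moment k a = integral {0..} (\<lambda>t. cosh t ^ k * exp (- a * cosh t))"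

lemma integrable_cosh_moment:
  fixes a :: real assumes a: "0 < a"
  shows "(\<lambda>t. cosh t ^ k * exp (- a * cosh t)) integrable_on {0..}"
proof (rule measurable_bounded_by_integrable_imp_integrable_real)
  show "(\<lambda>t. cosh t ^ k * exp (- a * cosh t)) \<in> borel_measurable (lebesgue_on {0..})"
    by (intro continuous_imp_measurable_on_sets_lebesgue continuous_intros) simp
  have exp_int: "(\<lambda>t. exp (- 1 * t)) integrable_on {0::real..}"
    by (rule integrable_on_exp_minus_to_infinity) simp
  show "(\<lambda>t. 2 * fact (k + 1) / a ^ (k + 1) * exp (- t)) integrable_on {0..}"
    using integrable_on_cmult_left[OF exp_int, of "2 * fact (k + 1) / a ^ (k + 1)"] by simp
  show "\<bar>cosh t ^ k * exp (- a * cosh t)\<bar> \<le> 2 * fact (k + 1) / a ^ (k + 1) * exp (- t)"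
    if "t \<in> {0..}" for t
    using cosh_power_mult_exp_le[OF a, of t k] that by (simp add: abs_mult)
qed simp

lemma has_integral_cosh_moment:
  "0 < a \<Longrightarrow> ((\<lambda>t. cosh t ^ k * exp (- a * cosh t)) has_integral cosh_moment k a) {0..}"
  unfolding cosh_moment_def by (rule integrable_integral[OF integrable_cosh_moment])

lemma cosh_moment_pos:
  fixes a :: real assumes a: "0 < a" shows "0 < cosh_moment k a"
proof -
  let ?f = "\<lambda>t. cosh t ^ k * exp (- a * cosh t)"
  have int01: "?f integrable_on {0..1}"
    by (intro integrable_continuous_real continuous_intros)
  have "integral {0..1::real} (\<lambda>t. exp (- a * cosh 1)) \<le> integral {0..1} ?f"
  proof (rule integral_le)
    fix t :: real assume t: "t \<in> {0..1}"
    have "cosh t \<le> cosh 1" using t by (simp add: cosh_real_nonneg_le_iff)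
    then have "exp (- a * cosh 1) \<le> exp (- a * cosh t)" using a by simp
    also have "\<dots> \<le> ?f t"
      using cosh_real_ge_1[of t] by (simp add: one_le_power)
    finally show "exp (- a * cosh 1) \<le> ?f t" .
  qed (use int01 in auto)
  also have "\<dots> \<le> cosh_moment k a"
    unfolding cosh_moment_def using int01 integrable_cosh_moment[OF a, of k]
    by (intro integral_subset_le) (auto intro!: mult_nonneg_nonneg)
  finally have "exp (- (a * cosh 1)) \<le> cosh_moment k a" by simp
  then show ?thesis using exp_gt_zero[of "- (a * cosh 1)"] by linarith
qed

lemma cosh_moment_antimono:
  assumes "0 < a" "a \<le> b" shows "cosh_moment k b \<le> cosh_moment k a"
  unfolding cosh_moment_def
proof (rule integral_le)
  show "(\<lambda>t. cosh t ^ k * exp (- b * cosh t)) integrable_on {0..}"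
       "(\<lambda>t. cosh t ^ k * exp (- a * cosh t)) integrable_on {0..}"
    using assms by (auto intro!: integrable_cosh_moment[simplified])
  show "cosh t ^ k * exp (- b * cosh t) \<le> cosh t ^ k * exp (- a * cosh t)" for t
    using assms cosh_real_pos[of t] by (intro mult_left_mono) auto
qed

lemma abs_exp_minus_one_minus_le:
  fixes u :: real shows "\<bar>exp u - 1 - u\<bar> \<le> exp \<bar>u\<bar> / 2 * u ^ 2"
proof -
  obtain s where s: "\<bar>s\<bar> \<le> \<bar>u\<bar>" "exp u = (\<Sum>m<2. u ^ m / fact m) + exp s / fact 2 * u ^ 2"
    using Maclaurin_exp_le[of u 2] by blast
  have "exp u - 1 - u = exp s / 2 * u ^ 2" using s(2) by (simp add: numeral_2_eq_2)
  moreover have "exp s / 2 * u ^ 2 \<le> exp \<bar>u\<bar> / 2 * u ^ 2"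
    using s(1) by (intro mult_right_mono) auto
  ultimately show ?thesis by (simp only:) simp
qed

lemma exp_scaled_taylor_le:
  fixes x h c :: real assumes c: "0 < c" and h: "\<bar>h\<bar> \<le> x / 2"
  shows "\<bar>exp (- (x + h) * c) - exp (- x * c) + h * c * exp (- x * c)\<bar>
    \<le> h ^ 2 * c ^ 2 * exp (- (x / 2) * c)"
proof -
  have "\<bar>exp (- (x + h) * c) - exp (- x * c) + h * c * exp (- x * c)\<bar>
      = \<bar>exp (- x * c) * (exp (- h * c) - 1 - (- h * c))\<bar>"
    by (simp add: algebra_simps exp_add[symmetric])
  also have "\<dots> = exp (- x * c) * \<bar>exp (- h * c) - 1 - (- h * c)\<bar>"
    by (simp add: abs_mult)
  also have "\<dots> \<le> exp (- x * c) * (exp \<bar>h * c\<bar> / 2 * (h * c) ^ 2)"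
    using abs_exp_minus_one_minus_le[of "- h * c"] by (intro mult_left_mono) auto
  also have "\<dots> \<le> exp (- x * c) * exp (\<bar>h\<bar> * c) * (h ^ 2 * c ^ 2)"
    using c by (simp add: abs_mult power_mult_distrib)
  also have "\<dots> = exp (- x * c + \<bar>h\<bar> * c) * (h ^ 2 * c ^ 2)"
    by (simp only: exp_add)
  also have "\<dots> \<le> exp (- (x / 2) * c) * (h ^ 2 * c ^ 2)"
    using h c by (intro mult_right_mono) (auto simp: algebra_simps mult_right_mono)
  finally show ?thesis by (simp add: algebra_simps)
qed

lemma cosh_moment_difference_quotient_le:
  fixes x h :: real assumes x: "0 < x" and h: "h \<noteq> 0" "\<bar>h\<bar> \<le> x / 2"
  shows "\<bar>(cosh_moment k (x + h) - cosh_moment k x) / h + cosh_moment (Suc k) x\<bar>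
    \<le> \<bar>h\<bar> * cosh_moment (k + 2) (x / 2)"
proof -
  have xh: "0 < x + h" using h x by linarith
  have diff: "((\<lambda>t. cosh t ^ k * exp (- (x + h) * cosh t) - cosh t ^ k * exp (- x * cosh t)
        + h * (cosh t ^ Suc k * exp (- x * cosh t))) has_integral
      cosh_moment k (x + h) - cosh_moment k x + h * cosh_moment (Suc k) x) {0..}"
    by (intro has_integral_add has_integral_diff has_integral_mult_right has_integral_cosh_moment xh x)
  have bound: "((\<lambda>t. h ^ 2 * (cosh t ^ (k + 2) * exp (- (x / 2) * cosh t))) has_integral
      h ^ 2 * cosh_moment (k + 2) (x / 2)) {0..}"
    using x by (intro has_integral_mult_right has_integral_cosh_moment) simp
  have "norm (cosh_moment k (x + h) - cosh_moment k x + h * cosh_moment (Suc k) x)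
      \<le> (h ^ 2 * cosh_moment (k + 2) (x / 2)) \<bullet> 1"
  proof (rule has_integral_norm_bound_integral_component[OF diff bound])
    fix t :: real
    let ?E = "exp (- (x + h) * cosh t) - exp (- x * cosh t) + h * cosh t * exp (- x * cosh t)"
    have "cosh t ^ k * exp (- (x + h) * cosh t) - cosh t ^ k * exp (- x * cosh t)
        + h * (cosh t ^ Suc k * exp (- x * cosh t)) = cosh t ^ k * ?E"
      by (simp add: algebra_simps)
    then have "norm (cosh t ^ k * exp (- (x + h) * cosh t) - cosh t ^ k * exp (- x * cosh t)
        + h * (cosh t ^ Suc k * exp (- x * cosh t))) = cosh t ^ k * \<bar>?E\<bar>"
      by (simp only: real_norm_def abs_mult abs_of_nonneg[OF zero_le_power[OF cosh_real_nonneg]])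
    also have "\<dots> \<le> cosh t ^ k * (h ^ 2 * cosh t ^ 2 * exp (- (x / 2) * cosh t))"
      using exp_scaled_taylor_le[OF cosh_real_pos h(2)] by (rule mult_left_mono) simp
    also have "\<dots> = (h ^ 2 * (cosh t ^ (k + 2) * exp (- (x / 2) * cosh t))) \<bullet> 1"
      by (simp add: power_add power2_eq_square)
    finally show "norm (cosh t ^ k * exp (- (x + h) * cosh t) - cosh t ^ k * exp (- x * cosh t)
        + h * (cosh t ^ Suc k * exp (- x * cosh t)))
      \<le> (h ^ 2 * (cosh t ^ (k + 2) * exp (- (x / 2) * cosh t))) \<bullet> 1" .
  qed
  then show ?thesis
    using h by (simp add: power2_eq_square field_simps abs_divide abs_mult divide_le_eq)
qed

lemma has_real_derivative_cosh_moment: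
  assumes x: "0 < x"
  shows "(cosh_moment k has_real_derivative - cosh_moment (Suc k) x) (at x)"
proof -
  let ?q = "\<lambda>h. (cosh_moment k (x + h) - cosh_moment k x) / h"
  let ?M = "cosh_moment (k + 2) (x / 2)"
  have "\<forall>\<^sub>F h in at 0. norm (?q h - - cosh_moment (Suc k) x) \<le> \<bar>h\<bar> * ?M"
    unfolding eventually_at
    by (rule exI[of _ "x / 2"]) (use x cosh_moment_difference_quotient_le in \<open>auto simp: dist_norm\<close>)
  moreover have "((\<lambda>h. \<bar>h\<bar> * ?M) \<longlongrightarrow> 0) (at (0::real))"
    by (auto intro!: tendsto_eq_intros)
  ultimately have "((\<lambda>h. ?q h - - cosh_moment (Suc k) x) \<longlongrightarrow> 0) (at 0)"
    by (rule Lim_null_comparison)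
  then show ?thesis
    unfolding DERIV_def by (simp only: LIM_zero_iff)
qed

lemma besselK0_eq_cosh_moment: "besselK 0 = cosh_moment 0"
  by (simp add: fun_eq_iff besselK_def cosh_moment_def)

lemma besselK1_eq_cosh_moment: "besselK 1 = cosh_moment 1"
  by (simp add: fun_eq_iff besselK_def cosh_moment_def mult.commute)

lemma has_real_derivative_besselK0:
  "0 < x \<Longrightarrow> (besselK 0 has_real_derivative - besselK 1 x) (at x)"
  unfolding besselK0_eq_cosh_moment besselK1_eq_cosh_moment
  using has_real_derivative_cosh_moment[of x 0] by simp

lemma besselK0_pos: "0 < x \<Longrightarrow> 0 < besselK 0 x"
  by (simp add: besselK0_eq_cosh_moment cosh_moment_pos)

lemma besselK1_pos: "0 < x \<Longrightarrow> 0 < besselK 1 x"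
  by (simp add: besselK1_eq_cosh_moment cosh_moment_pos)

lemma besselK1_antimono: "0 < x \<Longrightarrow> x \<le> y \<Longrightarrow> besselK 1 y \<le> besselK 1 x"
  by (simp add: besselK1_eq_cosh_moment cosh_moment_antimono)

section \<open>Power series of I0 and I1\<close>

definition besselI_coeff :: "nat \<Rightarrow> nat \<Rightarrow> real" where
  "besselI_coeff n k = 1 / (fact k * fact (k + n))"

definition besselI_series :: "nat \<Rightarrow> real \<Rightarrow> real" where
  "besselI_series n w = (\<Sum>k. besselI_coeff n k * w ^ k)"

lemma besselI_coeff_pos: "0 < besselI_coeff n k"
  by (simp add: besselI_coeff_def)

lemma summable_besselI_series: "summable (\<lambda>k. besselI_coeff n k * w ^ k)"
proof (rule summable_comparison_test'[OF summable_exp[of "\<bar>w\<bar>"]])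
  fix k
  have "besselI_coeff n k \<le> inverse (fact k)"
    unfolding besselI_coeff_def by (simp add: field_simps)
  then show "norm (besselI_coeff n k * w ^ k) \<le> inverse (fact k) * \<bar>w\<bar> ^ k"
    using besselI_coeff_pos[of n k] by (simp add: abs_mult power_abs mult_right_mono)
qed

lemma besselI_eq_series:
  "besselI n x = (x / 2) ^ nat \<bar>n\<bar> * besselI_series (nat \<bar>n\<bar>) (x ^ 2 / 4)"
proof -
  let ?m = "nat \<bar>n\<bar>"
  have "(x / 2) ^ (2 * k + ?m) / (fact k * fact (k + ?m))
      = (x / 2) ^ ?m * (besselI_coeff ?m k * (x ^ 2 / 4) ^ k)" for k
  proof -
    have "(x / 2) ^ (2 * k) = (x ^ 2 / 4) ^ k"
      unfolding power_mult by (simp add: power_divide)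
    then show ?thesis by (simp add: besselI_coeff_def power_add)
  qed
  then have "besselI n x = (\<Sum>k. (x / 2) ^ ?m * (besselI_coeff ?m k * (x ^ 2 / 4) ^ k))"
    unfolding besselI_def by simp
  also have "\<dots> = (x / 2) ^ ?m * besselI_series ?m (x ^ 2 / 4)"
    unfolding besselI_series_def by (rule suminf_mult[OF summable_besselI_series])
  finally show ?thesis .
qed

lemma diffs_besselI_coeff: "diffs (besselI_coeff n) = besselI_coeff (Suc n)"
  unfolding diffs_def besselI_coeff_def by (simp add: fun_eq_iff divide_simps)

lemma has_real_derivative_besselI_series:
  "(besselI_series n has_real_derivative besselI_series (Suc n) w) (at w)"
  unfolding besselI_series_def diffs_besselI_coeff[symmetric]
  by (rule termdiffs_strong_converges_everywhere[OF summable_besselI_series])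

lemma besselI_series_pos: "0 \<le> w \<Longrightarrow> 0 < besselI_series n w"
  unfolding besselI_series_def
  by (rule suminf_pos2[OF summable_besselI_series, where i = 0])
    (auto intro!: mult_nonneg_nonneg less_imp_le[OF besselI_coeff_pos] besselI_coeff_pos)

lemma besselI_series_mono: "0 \<le> v \<Longrightarrow> v \<le> w \<Longrightarrow> besselI_series n v \<le> besselI_series n w"
  unfolding besselI_series_def
  by (rule suminf_le[OF _ summable_besselI_series summable_besselI_series])
    (auto intro!: mult_left_mono power_mono less_imp_le[OF besselI_coeff_pos])

lemma besselI0_eq_series: "besselI 0 x = besselI_series 0 (x ^ 2 / 4)"
  using besselI_eq_series[of 0 x] by simp

lemma besselI1_eq_series: "besselI 1 x = x / 2 * besselI_series 1 (x ^ 2 / 4)"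
  using besselI_eq_series[of 1 x] by simp

lemma has_real_derivative_besselI0: "(besselI 0 has_real_derivative besselI 1 x) (at x)"
proof -
  have "((\<lambda>x. x ^ 2 / 4) has_real_derivative 2 * x / 4) (at x)"
    by (auto intro!: derivative_eq_intros)
  from DERIV_chain2[OF has_real_derivative_besselI_series this] show ?thesis
    unfolding besselI0_eq_series[abs_def] besselI1_eq_series by (simp add: field_simps)
qed

lemma besselI0_pos: "0 < besselI 0 x"
  by (simp add: besselI0_eq_series besselI_series_pos)

lemma besselI1_pos: "0 < x \<Longrightarrow> 0 < besselI 1 x"
  by (simp add: besselI1_eq_series besselI_series_pos)

lemma besselI1_strict_mono:
  assumes "0 \<le> x" "x < y" shows "besselI 1 x < besselI 1 y"
proof -
  have "x / 2 * besselI_series 1 (x ^ 2 / 4) < y / 2 * besselI_series 1 (x ^ 2 / 4)"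
    using assms besselI_series_pos[of "x ^ 2 / 4" 1] by (intro mult_strict_right_mono) auto
  also have "\<dots> \<le> y / 2 * besselI_series 1 (y ^ 2 / 4)"
    using assms by (intro mult_left_mono besselI_series_mono power_mono) auto
  finally show ?thesis by (simp add: besselI1_eq_series)
qed

section \<open>Ratios of power series with decreasing coefficient ratio\<close>

lemma antimono_mult_power_diff_nonneg:
  fixes l :: "nat \<Rightarrow> real" and v w :: real
  assumes l: "antimono l" and vw: "0 \<le> v" "v \<le> w"
  shows "0 \<le> (l i - l j) * (v ^ i * w ^ j - w ^ i * v ^ j)"
proof -
  have ordered: "0 \<le> (l i - l j) * (v ^ i * w ^ j - w ^ i * v ^ j)" if "i \<le> j" for i j
  proof -
    obtain d where d: "j = i + d" using \<open>i \<le> j\<close> le_Suc_ex by blast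
    have "(v * w) ^ i * v ^ d \<le> (v * w) ^ i * w ^ d"
      using vw by (intro mult_left_mono power_mono) auto
    then have "0 \<le> v ^ i * w ^ j - w ^ i * v ^ j"
      unfolding d by (simp add: power_add power_mult_distrib algebra_simps)
    moreover have "0 \<le> l i - l j" using l \<open>i \<le> j\<close> by (simp add: antimonoD)
    ultimately show ?thesis by simp
  qed
  show ?thesis
  proof (cases "i \<le> j")
    case False
    then have "0 \<le> (l j - l i) * (v ^ j * w ^ i - w ^ j * v ^ i)" by (intro ordered) simp
    then show ?thesis by (simp add: algebra_simps)
  qed (rule ordered)
qed

text \<open>The Cauchy products of the two sides differ by sums that become termwise nonnegative
  after pairing the indices i and k - i.\<close>
lemma power_series_ratio_strict_antimono:
  fixes c l :: "nat \<Rightarrow> real" and v w :: real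
  assumes c: "\<And>n. 0 < c n" and l: "antimono l" "l 1 < l 0" "\<And>n. 0 \<le> l n"
    and summable: "\<And>x. 0 \<le> x \<Longrightarrow> summable (\<lambda>n. c n * x ^ n)"
    and vw: "0 \<le> v" "v < w"
  shows "(\<Sum>n. c n * l n * w ^ n) * (\<Sum>n. c n * v ^ n)
    < (\<Sum>n. c n * l n * v ^ n) * (\<Sum>n. c n * w ^ n)"
proof -
  have summable_norm_c: "summable (\<lambda>n. norm (c n * x ^ n))" if "0 \<le> x" for x
    using summable[OF that] c that by (simp add: abs_mult less_imp_le)
  have summable_norm_cl: "summable (\<lambda>n. norm (c n * l n * x ^ n))" if "0 \<le> x" for x
  proof (rule summable_comparison_test'[OF summable_mult[OF summable[OF that], of "l 0"]])
    show "norm (norm (c n * l n * x ^ n)) \<le> l 0 * (c n * x ^ n)" for n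
      using c[of n] l that antimonoD[OF l(1), of 0 n]
      by (simp add: abs_mult mult_right_mono mult_left_mono less_imp_le)
  qed
  define g where "g k i = c i * c (k - i) * l i * (v ^ i * w ^ (k - i) - w ^ i * v ^ (k - i))"
    for k i
  have "(\<lambda>k. \<Sum>i\<le>k. (c i * l i * v ^ i) * (c (k - i) * w ^ (k - i)))
      sums ((\<Sum>n. c n * l n * v ^ n) * (\<Sum>n. c n * w ^ n))"
    using vw by (intro Cauchy_product_sums summable_norm_c summable_norm_cl) auto
  moreover have "(\<lambda>k. \<Sum>i\<le>k. (c i * l i * w ^ i) * (c (k - i) * v ^ (k - i)))
      sums ((\<Sum>n. c n * l n * w ^ n) * (\<Sum>n. c n * v ^ n))"
    using vw by (intro Cauchy_product_sums summable_norm_c summable_norm_cl) auto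
  ultimately have sums: "(\<lambda>k. \<Sum>i\<le>k. g k i) sums
      ((\<Sum>n. c n * l n * v ^ n) * (\<Sum>n. c n * w ^ n) - (\<Sum>n. c n * l n * w ^ n) * (\<Sum>n. c n * v ^ n))"
    unfolding g_def by (auto dest: sums_diff simp: sum_subtractf[symmetric] algebra_simps)
  have nonneg: "0 \<le> (\<Sum>i\<le>k. g k i)" for k
  proof -
    have "2 * (\<Sum>i\<le>k. g k i) = (\<Sum>i\<le>k. g k i) + (\<Sum>i\<le>k. g k (k - i))"
      using sum.atLeastAtMost_rev[of "g k" 0 k] by (simp add: atLeast0AtMost)
    also have "\<dots> = (\<Sum>i\<le>k. c i * c (k - i) *
        ((l i - l (k - i)) * (v ^ i * w ^ (k - i) - w ^ i * v ^ (k - i))))"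
      unfolding sum.distrib[symmetric] by (intro sum.cong) (auto simp: g_def algebra_simps)
    also have "0 \<le> \<dots>"
      using vw c by (intro sum_nonneg mult_nonneg_nonneg antimono_mult_power_diff_nonneg l(1))
        (auto intro: less_imp_le)
    finally show ?thesis by simp
  qed
  have "(\<Sum>i\<le>1. g 1 i) = c 0 * c 1 * (l 0 - l 1) * (w - v)"
    by (simp add: g_def algebra_simps)
  also have "0 < \<dots>"
    using c vw l(2) by simp
  finally have "0 < (\<Sum>i\<le>1. g 1 i)" .
  from suminf_pos2[OF sums_summable[OF sums] nonneg this] sums_unique[OF sums] show ?thesis
    by simp
qed

lemma besselI_series_ratio_strict_antimono:
  assumes "0 \<le> v" "v < w"
  shows "besselI_series 1 w * besselI_series 0 v < besselI_series 1 v * besselI_series 0 w"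
proof -
  have coeff: "besselI_coeff 1 k = besselI_coeff 0 k * (1 / (real k + 1))" for k
    by (simp add: besselI_coeff_def)
  have "antimono (\<lambda>k. 1 / (real k + 1))"
    by (intro antimonoI) (simp add: frac_le)
  from power_series_ratio_strict_antimono[OF besselI_coeff_pos this _ _ summable_besselI_series assms]
  show ?thesis
    unfolding besselI_series_def coeff by simp
qed

section \<open>The multiplier of the zeroth mode\<close>

lemma deriv_besselI0: "deriv (besselI 0) x = besselI 1 x"
  by (rule DERIV_imp_deriv[OF has_real_derivative_besselI0])

lemma deriv_besselK0: "0 < x \<Longrightarrow> deriv (besselK 0) x = - besselK 1 x"
  by (rule DERIV_imp_deriv[OF has_real_derivative_besselK0])

lemma D01_0_eq: "0 < y \<Longrightarrow> D01 0 x y = - besselI 0 x * besselK 1 y - besselK 0 x * besselI 1 y"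
  by (simp add: D01_def deriv_besselI0 deriv_besselK0)

lemma D10_0_eq: "0 < x \<Longrightarrow> D10 0 x y = besselI 1 x * besselK 0 y + besselK 1 x * besselI 0 y"
  by (simp add: D10_def deriv_besselI0 deriv_besselK0)

lemma D11_0_eq:
  "0 < x \<Longrightarrow> 0 < y \<Longrightarrow> D11 0 x y = besselK 1 x * besselI 1 y - besselI 1 x * besselK 1 y"
  by (simp add: D11_def deriv_besselI0 deriv_besselK0)

lemma D11_0_neg:
  assumes "0 < r" "r < 1" shows "D11 0 1 r < 0"
proof -
  have "besselK 1 1 * besselI 1 r < besselK 1 1 * besselI 1 1"
    using assms besselK1_pos[of 1] besselI1_strict_mono[of r 1] by simp
  also have "\<dots> \<le> besselK 1 r * besselI 1 1"
    using assms besselI1_pos[of 1] besselK1_antimono[of r 1] by (intro mult_right_mono) auto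
  finally show ?thesis
    using assms by (simp add: D11_0_eq mult.commute)
qed

lemma D10_0_pos: "0 < r \<Longrightarrow> 0 < D10 0 1 r"
  by (simp add: D10_0_eq add_pos_pos besselI0_pos besselI1_pos besselK0_pos besselK1_pos)

lemma D_0_det_eq:
  assumes "0 < x" "0 < y"
  shows "D01 0 x y * D10 0 x y - Dfun 0 x y * D11 0 x y
    = - ((besselI 0 x * besselK 1 x + besselK 0 x * besselI 1 x)
        * (besselI 0 y * besselK 1 y + besselK 0 y * besselI 1 y))"
  using assms by (simp add: D01_0_eq D10_0_eq D11_0_eq Dfun_def algebra_simps)

lemma D_0_det_neg:
  assumes "0 < x" "0 < y"
  shows "D01 0 x y * D10 0 x y - Dfun 0 x y * D11 0 x y < 0"
  unfolding D_0_det_eq[OF assms] using assms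
  by (simp add: mult_pos_pos add_pos_pos besselI0_pos besselI1_pos besselK0_pos besselK1_pos)

lemma linear_fractional_eq_imp_eq:
  fixes A B C E s t :: real
  assumes "A * E \<noteq> B * C" "C - s * E \<noteq> 0" "C - t * E \<noteq> 0"
    and "(A - s * B) / (C - s * E) = (A - t * B) / (C - t * E)"
  shows "s = t"
proof -
  from assms(2-4) have "(A - s * B) * (C - t * E) = (A - t * B) * (C - s * E)"
    by (simp add: frac_eq_eq)
  then have "(s - t) * (A * E - B * C) = 0"
    by (simp add: algebra_simps)
  with assms(1) show ?thesis by simp
qed

lemma NtD_mult_0_eq:
  fixes \<sigma> r :: real
  assumes "0 < \<sigma>"
  defines "\<tau> \<equiv> sqrt \<sigma> * besselI 1 (r / sqrt \<sigma>) / besselI 0 (r / sqrt \<sigma>)"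
  shows "NtD_mult \<sigma> r 0 = (D01 0 1 r - \<tau> * Dfun 0 1 r) / (D11 0 1 r - \<tau> * D10 0 1 r)"
proof -
  let ?a = "besselI 0 (r / sqrt \<sigma>)"
  have "((\<lambda>r. r / sqrt \<sigma>) has_real_derivative 1 / sqrt \<sigma>) (at r)"
    using DERIV_cdivide[OF DERIV_ident, where c = "sqrt \<sigma>"] by simp
  from DERIV_chain2[OF has_real_derivative_besselI0 this]
  have "deriv (\<lambda>r. besselI 0 (r / sqrt \<sigma>)) r = besselI 1 (r / sqrt \<sigma>) * (1 / sqrt \<sigma>)"
    by (rule DERIV_imp_deriv)
  then have "\<sigma> * deriv (\<lambda>r. besselI 0 (r / sqrt \<sigma>)) r = \<sigma> / sqrt \<sigma> * besselI 1 (r / sqrt \<sigma>)"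
    by simp
  also have "\<dots> = \<tau> * ?a"
    using assms besselI0_pos[of "r / sqrt \<sigma>"] by (simp add: \<tau>_def real_div_sqrt)
  finally have b: "\<sigma> * deriv (\<lambda>r. besselI 0 (r / sqrt \<sigma>)) r = \<tau> * ?a" .
  have "NtD_mult \<sigma> r 0
      = (?a * (D01 0 1 r - \<tau> * Dfun 0 1 r)) / (?a * (D11 0 1 r - \<tau> * D10 0 1 r))"
    unfolding NtD_mult_def Let_def b by (simp only: right_diff_distrib mult.assoc mult.left_commute)
  also have "\<dots> = (D01 0 1 r - \<tau> * Dfun 0 1 r) / (D11 0 1 r - \<tau> * D10 0 1 r)"
    using besselI0_pos[of "r / sqrt \<sigma>"] by simp
  finally show ?thesis .
qed

lemma sqrt_mult_besselI_ratio_inj: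
  assumes r: "0 < r" and \<sigma>: "0 < \<sigma>1" "0 < \<sigma>2"
    and eq: "sqrt \<sigma>1 * besselI 1 (r / sqrt \<sigma>1) / besselI 0 (r / sqrt \<sigma>1)
      = sqrt \<sigma>2 * besselI 1 (r / sqrt \<sigma>2) / besselI 0 (r / sqrt \<sigma>2)"
  shows "\<sigma>1 = \<sigma>2"
proof -
  have series: "sqrt \<sigma> * besselI 1 (r / sqrt \<sigma>) / besselI 0 (r / sqrt \<sigma>)
      = r / 2 * besselI_series 1 (r ^ 2 / (4 * \<sigma>)) / besselI_series 0 (r ^ 2 / (4 * \<sigma>))"
    if "0 < \<sigma>" for \<sigma>
    using that by (simp add: besselI0_eq_series besselI1_eq_series power_divide ac_simps)
  define w1 w2 where "w1 = r ^ 2 / (4 * \<sigma>1)" and "w2 = r ^ 2 / (4 * \<sigma>2)"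
  have w: "0 \<le> w1" "0 \<le> w2" using \<sigma> by (simp_all add: w1_def w2_def)
  have "besselI_series 1 w1 * besselI_series 0 w2 = besselI_series 1 w2 * besselI_series 0 w1"
    using eq r w besselI_series_pos[of w1 0] besselI_series_pos[of w2 0]
    unfolding series[OF \<sigma>(1)] series[OF \<sigma>(2)] w1_def[symmetric] w2_def[symmetric]
    by (simp add: field_simps)
  then have "w1 = w2"
    using besselI_series_ratio_strict_antimono[of w1 w2] besselI_series_ratio_strict_antimono[of w2 w1] w
    by (cases w1 w2 rule: linorder_cases) (auto simp: mult.commute)
  then show ?thesis
    using r \<sigma> by (simp add: w1_def w2_def frac_eq_eq)
qed

lemma NtD_mult_0_inj:
  assumes r: "0 < r" "r < 1" and \<sigma>: "0 < \<sigma>1" "0 < \<sigma>2"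
    and eq: "NtD_mult \<sigma>1 r 0 = NtD_mult \<sigma>2 r 0"
  shows "\<sigma>1 = \<sigma>2"
proof -
  let ?\<tau> = "\<lambda>\<sigma>. sqrt \<sigma> * besselI 1 (r / sqrt \<sigma>) / besselI 0 (r / sqrt \<sigma>)"
  have denom_neg: "D11 0 1 r - ?\<tau> \<sigma> * D10 0 1 r < 0" if "0 < \<sigma>" for \<sigma>
  proof -
    have "0 \<le> ?\<tau> \<sigma>"
      using that r besselI1_pos[of "r / sqrt \<sigma>"] besselI0_pos[of "r / sqrt \<sigma>"] by simp
    then show ?thesis
      using D11_0_neg[OF r] D10_0_pos[OF r(1)] mult_nonneg_nonneg[of "?\<tau> \<sigma>" "D10 0 1 r"]
      by linarith
  qed
  have "?\<tau> \<sigma>1 = ?\<tau> \<sigma>2"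
  proof (rule linear_fractional_eq_imp_eq)
    show "D01 0 1 r * D10 0 1 r \<noteq> Dfun 0 1 r * D11 0 1 r"
      using D_0_det_neg[of 1 r] r by simp
    show "D11 0 1 r - ?\<tau> \<sigma>1 * D10 0 1 r \<noteq> 0" "D11 0 1 r - ?\<tau> \<sigma>2 * D10 0 1 r \<noteq> 0"
      using denom_neg \<sigma> by (simp_all add: less_imp_neq)
    show "(D01 0 1 r - ?\<tau> \<sigma>1 * Dfun 0 1 r) / (D11 0 1 r - ?\<tau> \<sigma>1 * D10 0 1 r)
        = (D01 0 1 r - ?\<tau> \<sigma>2 * Dfun 0 1 r) / (D11 0 1 r - ?\<tau> \<sigma>2 * D10 0 1 r)"
      using eq by (simp only: NtD_mult_0_eq \<sigma>)
  qed
  then show ?thesis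
    using sqrt_mult_besselI_ratio_inj r(1) \<sigma> by blast
qed

lemma indicator_0_in_Hmhalf: "(\<lambda>n::int. if n = 0 then 1 else 0) \<in> Hmhalf"
proof -
  let ?f = "\<lambda>n::int. (1 + real_of_int n ^ 2) powr (-1/2) * (cmod (if n = 0 then 1 else 0))\<^sup>2"
  have "?f summable_on {0}" by simp
  then have "?f summable_on UNIV"
    by (rule summable_on_cong_neutral[THEN iffD1, rotated -1]) auto
  then show ?thesis unfolding Hmhalf_def by simp
qed

theorem theorem2p2:
  fixes r1 \<sigma>1 \<sigma>2 :: real
  assumes "0 < r1" and "r1 < 1" and "0 < \<sigma>1" and "0 < \<sigma>2"
    and "\<forall>g\<in>Hmhalf. NtD \<sigma>1 r1 g = NtD \<sigma>2 r1 g"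
  shows "\<sigma>1 = \<sigma>2"
proof -
  let ?e0 = "\<lambda>n::int. if n = 0 then 1 else 0"
  have "NtD \<sigma>1 r1 ?e0 0 = NtD \<sigma>2 r1 ?e0 0"
    using assms(5) indicator_0_in_Hmhalf by simp
  then have "NtD_mult \<sigma>1 r1 0 = NtD_mult \<sigma>2 r1 0"
    by (simp add: NtD_def)
  with assms(1-4) show ?thesis
    by (rule NtD_mult_0_inj)
qed

end
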